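(* In the setting described in the context, fix $t_0\in(0,T_0)$ and let $w_i$ be as defined there. If $i\,\dot\sim\, j$, then there exists a sequence $s_n\to T_0$, $s_n\in[t_0,T_0)$, such that $|w_i(s_n)-w_j(s_n)|\to 0$.
   Context: Setting: $N,d\ge 1$, $\alpha\in(0,1)$, $\psi(s)=s^{-\alpha}$ ($s>0$), $\psi(0)=0$; $\psi_n(s)=\psi(s)$ for $s\ge(n-1)^{-1/\alpha}$, $\psi_n(s)=n$ for $s\le n^{-1/\alpha}$, smooth and monotone in between. Fix $T>0$ and initial data $x(0),v(0)\in\mathbb{R}^{Nd}$; let $x^n$ be the $C^2$ solution on $[0,T]$ of $\dot x^n_i=v^n_i$, $\dot v^n_i=\frac1N\sum_k(v^n_k-v^n_i)\psi_n(|x^n_i-x^n_k|)$ with these data. Pass to a subsequence (not relabeled) with $x^n\to x$ uniformly on $[0,T]$. Let $B_i(0)=\{k: x_k(0)\ne x_i(0)\text{ or }v_k(0)\ne v_i(0)\}$ and $T_0:=\inf\{t>0:\min_{i,\ j\in B_i(0)}\lim_{n}|x^n_i(t)-x^n_j(t)|=0\}$; assume $T_0\le T$. Assume moreover (after a further subsequence) that $x^n\to x$ in $C^1([0,t])$ for every $t<T_0$, and set $v=\dot x$ on $[0,T_0)$. Define $i\,\dot\sim\, j$ iff $j\notin B_i(0)$ or $\int_t^{T_0}\psi(|x_i(s)-x_j(s)|)ds=\infty$ for all $t<T_0$; let $\sim$ be the equivalence relation generated by $\dot\sim$ (its transitive closure), with classes $[i]$. For fixed $t_0\in(0,T_0)$,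 $w_i=w_i^{t_0}$ ($i=1,\dots,N$) is the solution on $[t_0,T_0)$ of $\dot w_i=\frac1N\sum_{k\in[i]}(w_k-w_i)\psi(|x_i-x_k|)$ with $w_i(t_0)=v_i(t_0)$. *)

theory Defs
  imports "HOL-Analysis.Analysis"
begin

definition psi :: "real \<Rightarrow> real \<Rightarrow> real" where
  "psi \<alpha> s = (if s = 0 then 0 else s powr (- \<alpha>))"

definition Bset :: "('i \<Rightarrow> 'v) \<Rightarrow> ('i \<Rightarrow> 'v) \<Rightarrow> 'i \<Rightarrow> 'i set" where
  "Bset x0 v0 i = {k. x0 k \<noteq> x0 i \<or> v0 k \<noteq> v0 i}"

definition dotsim :: "real \<Rightarrow> ('i \<Rightarrow> real ^ 'd) \<Rightarrow> ('i \<Rightarrow> real ^ 'd)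
    \<Rightarrow> (real \<Rightarrow> 'i \<Rightarrow> real ^ 'd) \<Rightarrow> real \<Rightarrow> 'i \<Rightarrow> 'i \<Rightarrow> bool" where
  "dotsim \<alpha> x0 v0 x T0 i j \<longleftrightarrow>
     j \<notin> Bset x0 v0 i \<or>
     (\<forall>t\<in>{0..<T0}. (\<integral>\<^sup>+ s\<in>{t..<T0}. ennreal (psi \<alpha> (norm (x s i - x s j))) \<partial>lborel) = \<infinity>)"

definition simrel :: "real \<Rightarrow> ('i \<Rightarrow> real ^ 'd) \<Rightarrow> ('i \<Rightarrow> real ^ 'd)
    \<Rightarrow> (real \<Rightarrow> 'i \<Rightarrow> real ^ 'd) \<Rightarrow> real \<Rightarrow> 'i \<Rightarrow> 'i \<Rightarrow> bool" where
  "simrel \<alpha> x0 v0 x T0 = equivclp (dotsim \<alpha> x0 v0 x T0)"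

definition simclass :: "real \<Rightarrow> ('i \<Rightarrow> real ^ 'd) \<Rightarrow> ('i \<Rightarrow> real ^ 'd)
    \<Rightarrow> (real \<Rightarrow> 'i \<Rightarrow> real ^ 'd) \<Rightarrow> real \<Rightarrow> 'i \<Rightarrow> 'i set" where
  "simclass \<alpha> x0 v0 x T0 i = {k. simrel \<alpha> x0 v0 x T0 i k}"

end

theory Submission
  imports Defs
begin

text \<open>
  If \<open>j \<notin> B\<^sub>i(0)\<close>, particles \<open>i\<close> and \<open>j\<close> start from identical data. For the regularised kernels,
  which are Lipschitz, Gronwall's inequality applied to \<open>|x\<^sub>i - x\<^sub>j|\<^sup>2 + |v\<^sub>i - v\<^sub>j|\<^sup>2\<close> shows that
  they never separate; hence \<open>x\<^sub>i = x\<^sub>j\<close> and \<open>v\<^sub>i = v\<^sub>j\<close> in the limit, the equations of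
  \<open>w\<^sub>i\<close> and \<open>w\<^sub>j\<close> have the same coefficients, and \<open>w\<^sub>i = w\<^sub>j\<close> by Gronwall again.

  Otherwise \<open>\<psi>(|x\<^sub>i - x\<^sub>j|)\<close> is not integrable up to \<open>T\<^sub>0\<close>. The linear system for \<open>w\<close> on the
  class \<open>[i]\<close> dissipates the energy \<open>\<Sum>\<^sub>k |w\<^sub>k|\<^sup>2\<close> at the rate
  \<open>1/N \<Sum>\<^sub>k\<^sub>,\<^sub>l \<psi>(|x\<^sub>k - x\<^sub>l|) |w\<^sub>k - w\<^sub>l|\<^sup>2\<close>, so if \<open>|w\<^sub>i - w\<^sub>j| \<ge> \<epsilon>\<close> near \<open>T\<^sub>0\<close>, the
  integral of \<open>\<psi>(|x\<^sub>i - x\<^sub>j|)\<close> would be bounded by the initial energy divided by \<open>\<epsilon>\<^sup>2/N\<close>.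
\<close>

lemma nonneg_vanishes_if_deriv_le_linear:
  fixes f f' :: "real \<Rightarrow> real"
  assumes deriv: "\<And>t. t \<in> {a..b} \<Longrightarrow> (f has_real_derivative f' t) (at t within {a..b})"
    and le: "\<And>t. t \<in> {a..b} \<Longrightarrow> f' t \<le> K * f t"
    and nonneg: "\<And>t. t \<in> {a..b} \<Longrightarrow> 0 \<le> f t"
    and start: "f a = 0" and t: "t \<in> {a..b}"
  shows "f t = 0"
proof -
  define h where "h s = exp (- K * s) * f s" for s
  define h' where "h' s = exp (- K * s) * (f' s - K * f s)" for s
  have "(h has_real_derivative h' s) (at s within {a..t})" if "s \<in> {a..t}" for s
  proof -
    have "(f has_real_derivative f' s) (at s within {a..t})"
      by (rule DERIV_subset[OF deriv]) (use that t in auto)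
    then show ?thesis
      unfolding h_def h'_def by (auto intro!: derivative_eq_intros simp: algebra_simps)
  qed
  then have integral: "(h' has_integral h t - h a) {a..t}"
    using t by (intro fundamental_theorem_of_calculus) (auto simp: has_real_derivative_iff_has_vector_derivative)
  have "h' s \<le> 0" if "s \<in> {a..t}" for s
    using le[of s] that t by (simp add: h'_def mult_nonneg_nonpos)
  then have "h t \<le> h a"
    using has_integral_le[OF integral has_integral_0] by auto
  then show ?thesis
    using start nonneg[OF t] by (simp add: h_def mult_le_0_iff)
qed

lemma has_real_derivative_inner_self:
  fixes D :: "real \<Rightarrow> 'a::real_inner"
  assumes "(D has_vector_derivative D') (at t within S)"
  shows "((\<lambda>s. D s \<bullet> D s) has_real_derivative 2 * (D t \<bullet> D')) (at t within S)"
proof -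
  have "((\<lambda>s. D s \<bullet> D s) has_derivative (\<lambda>h. D t \<bullet> (h *\<^sub>R D') + (h *\<^sub>R D') \<bullet> D t)) (at t within S)"
    using assms unfolding has_vector_derivative_def by (intro has_derivative_inner) auto
  then show ?thesis
    unfolding has_field_derivative_def
    by (rule has_derivative_eq_rhs) (auto simp: inner_commute algebra_simps fun_eq_iff)
qed

lemma lipschitz_on_if_constant_near_zero:
  fixes g :: "real \<Rightarrow> real"
  assumes a: "0 < a" and const: "\<And>s. 0 \<le> s \<Longrightarrow> s \<le> a \<Longrightarrow> g s = c"
    and diff: "\<And>s. 0 < s \<Longrightarrow> g differentiable (at s)"
    and cont: "\<And>s. 0 < s \<Longrightarrow> isCont (deriv g) s"
  shows "\<exists>L. L-lipschitz_on {0..R} g"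
proof -
  define R' where "R' = max a R"
  have "compact (deriv g ` {a..R'})"
    using a cont by (intro compact_continuous_image continuous_at_imp_continuous_on) auto
  then obtain L where L: "0 < L" "\<And>s. s \<in> {a..R'} \<Longrightarrow> \<bar>deriv g s\<bar> \<le> L"
    by (fastforce dest: compact_imp_bounded simp: bounded_pos)
  have "L-lipschitz_on {a..R'} g"
  proof (rule bounded_derivative_imp_lipschitz)
    show "(g has_derivative (\<lambda>h. h *\<^sub>R deriv g s)) (at s within {a..R'})" if "s \<in> {a..R'}" for s
    proof -
      have "(g has_real_derivative deriv g s) (at s)"
        using diff[of s] that a by (simp add: DERIV_deriv_iff_real_differentiable)
      then show ?thesis
        unfolding has_real_derivative_iff_has_vector_derivative has_vector_derivative_def
        by (rule has_derivative_at_withinI)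
    qed
    show "onorm (\<lambda>h. h *\<^sub>R deriv g s) \<le> L" if "s \<in> {a..R'}" for s
      using onorm_scaleR_left[OF bounded_linear_ident, where f="deriv g s"] onorm_id[where 'a=real] L(2)[OF that]
      by simp
  qed (use L in auto)
  then have glued: "(max 0 L)-lipschitz_on {0..R'} (\<lambda>s. if s \<le> a then c else g s)"
    using a const[of a] unfolding R'_def by (intro lipschitz_on_concat_max lipschitz_on_constant) auto
  have "L-lipschitz_on {0..R} (\<lambda>s. if s \<le> a then c else g s)"
    by (rule lipschitz_on_mono[OF glued]) (use L in \<open>auto simp: R'_def\<close>)
  then have "L-lipschitz_on {0..R} g"
    by (rule lipschitz_on_transform) (simp add: const)
  then show ?thesis ..
qed

lemma bounded_finite_family_on_compact:
  fixes f :: "real \<Rightarrow> 'i::finite \<Rightarrow> 'a::real_normed_vector"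
  assumes "\<And>k. continuous_on S (\<lambda>t. f t k)" "compact S"
  obtains B where "\<And>t k. t \<in> S \<Longrightarrow> norm (f t k) \<le> B"
proof -
  have "\<exists>B. \<forall>t\<in>S. norm (f t k) \<le> B" for k
  proof -
    have "compact ((\<lambda>t. f t k) ` S)"
      using assms by (intro compact_continuous_image) auto
    then show ?thesis
      using compact_imp_bounded[THEN bounded_iff[THEN iffD1]] by fast
  qed
  then obtain B where B: "\<And>k t. t \<in> S \<Longrightarrow> norm (f t k) \<le> B k"
    by metis
  have "norm (f t k) \<le> (\<Sum>l\<in>UNIV. \<bar>B l\<bar>)" if "t \<in> S" for t k
  proof -
    have "\<bar>B k\<bar> \<le> (\<Sum>l\<in>UNIV. \<bar>B l\<bar>)"
      by (rule member_le_sum) auto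
    then show ?thesis
      using B[OF that, of k] by linarith
  qed
  then show ?thesis using that by blast
qed

lemma cross_terms_le_sum_squares:
  fixes a b c P :: real
  assumes "0 \<le> c" "0 \<le> P"
  shows "2 * (a * b) + 2 * (b * (c * a + P * b)) \<le> (1 + c + 2 * P) * (a * a + b * b)"
proof -
  have "2 * (a * b) \<le> a * a + b * b"
    using zero_le_square[of "a - b"] by (simp add: algebra_simps power2_eq_square)
  moreover from this have "c * (2 * (a * b)) \<le> c * (a * a + b * b)"
    using assms(1) by (rule mult_left_mono)
  moreover have "0 \<le> P * (a * a)"
    using assms(2) by simp
  ultimately show ?thesis
    by (simp add: algebra_simps)
qed

lemma uniform_limits_eq_at:
  assumes "uniform_limit S F G sequentially" "uniform_limit S F' G' sequentially"
    and "\<And>n. F n t = F' n t" and "t \<in> S"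
  shows "G t = G' t"
proof -
  have "(\<lambda>n. F n t) \<longlonglongrightarrow> G t" "(\<lambda>n. F n t) \<longlonglongrightarrow> G' t"
    using tendsto_uniform_limitI[OF assms(1) assms(4)] tendsto_uniform_limitI[OF assms(2) assms(4)] assms(3)
    by simp_all
  then show ?thesis
    by (rule LIMSEQ_unique)
qed

lemma sequence_to_right_end_if_frequently_small:
  fixes f :: "real \<Rightarrow> real"
  assumes small: "\<And>\<epsilon> \<tau>. 0 < \<epsilon> \<Longrightarrow> \<tau> < b \<Longrightarrow> \<exists>s\<in>{a..<b}. \<tau> < s \<and> \<bar>f s\<bar> < \<epsilon>"
  shows "\<exists>s :: nat \<Rightarrow> real. (\<forall>n. s n \<in> {a..<b}) \<and> s \<longlonglongrightarrow> b \<and> (\<lambda>n. f (s n)) \<longlonglongrightarrow> 0"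
proof -
  have "\<forall>n. \<exists>s. s \<in> {a..<b} \<and> b - 1 / real (Suc n) < s \<and> \<bar>f s\<bar> < 1 / real (Suc n)"
  proof
    fix n
    show "\<exists>s. s \<in> {a..<b} \<and> b - 1 / real (Suc n) < s \<and> \<bar>f s\<bar> < 1 / real (Suc n)"
      using small[of "1 / real (Suc n)" "b - 1 / real (Suc n)"] by auto
  qed
  then obtain s where s: "\<And>n. s n \<in> {a..<b}" "\<And>n. b - 1 / real (Suc n) < s n" "\<And>n. \<bar>f (s n)\<bar> < 1 / real (Suc n)"
    by metis
  have "norm (s n - b) < 1 / real (Suc n)" for n
    using s(1,2)[of n] by simp
  then have "(\<lambda>n. s n - b) \<longlonglongrightarrow> 0"
    by (rule LIMSEQ_norm_0)
  then have "s \<longlonglongrightarrow> b"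
    by (simp add: LIM_zero_cancel)
  moreover have "(\<lambda>n. f (s n)) \<longlonglongrightarrow> 0"
    using s(3) by (intro LIMSEQ_norm_0) simp
  ultimately show ?thesis
    using s(1) by blast
qed

lemma set_nn_integral_Ico_le:
  fixes f :: "real \<Rightarrow> ennreal"
  assumes meas: "(\<lambda>s. f s * indicator {a..<b} s) \<in> borel_measurable lborel"
    and bound: "\<And>c. a \<le> c \<Longrightarrow> c < b \<Longrightarrow> (\<integral>\<^sup>+ s\<in>{a..c}. f s \<partial>lborel) \<le> B"
  shows "(\<integral>\<^sup>+ s\<in>{a..<b}. f s \<partial>lborel) \<le> B"
proof (cases "a < b")
  case True
  define c where "c m = b - (b - a) / real (Suc m)" for m
  have c: "a \<le> c m" "c m < b" for m
    using True mult_right_mono[of a b "real m"] by (auto simp: c_def field_simps)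
  have "incseq c"
    unfolding incseq_def c_def using True by (auto intro!: divide_left_mono mult_pos_pos)
  have "(\<Union>m. {a..c m}) = {a..<b}"
  proof (intro equalityI subsetI)
    fix s assume "s \<in> {a..<b}"
    then obtain m where "inverse (real (Suc m)) < (b - s) / (b - a)"
      using reals_Archimedean[of "(b - s) / (b - a)"] True by auto
    then have "s \<le> c m"
      using True by (simp add: c_def field_simps)
    then show "s \<in> (\<Union>m. {a..c m})"
      using \<open>s \<in> {a..<b}\<close> by auto
  qed (auto intro: le_less_trans[OF _ c(2)])
  define M where "M = density lborel (\<lambda>s. f s * indicator {a..<b} s)"
  have integral_eq: "(\<integral>\<^sup>+ s\<in>A. f s \<partial>lborel) = emeasure M A" if "A \<subseteq> {a..<b}" "A \<in> sets borel" for A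
    using that unfolding M_def
    by (subst emeasure_density[OF meas]) (auto intro!: nn_integral_cong simp: indicator_def)
  have "emeasure M {a..<b} = (SUP m. emeasure M {a..c m})"
    using \<open>(\<Union>m. {a..c m}) = {a..<b}\<close> \<open>incseq c\<close>
    by (subst SUP_emeasure_incseq) (auto simp: M_def incseq_def intro: order_trans)
  also have "\<dots> \<le> B"
  proof (rule SUP_least)
    fix m
    have "emeasure M {a..c m} = (\<integral>\<^sup>+ s\<in>{a..c m}. f s \<partial>lborel)"
      using c(2)[of m] by (intro integral_eq[symmetric]) auto
    also have "\<dots> \<le> B"
      using bound c by simp
    finally show "emeasure M {a..c m} \<le> B" .
  qed
  finally show ?thesis
    using integral_eq[of "{a..<b}"] by simp
qed simp

lemma kernel_term_difference_bound:
  fixes xi xj xl vi vj vl :: "'a::real_normed_vector"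
  assumes lip: "\<bar>p (norm (xi - xl)) - p (norm (xj - xl))\<bar> \<le> L * \<bar>norm (xi - xl) - norm (xj - xl)\<bar>"
    and L: "0 \<le> L" and P: "\<bar>p (norm (xj - xl))\<bar> \<le> P"
    and V: "norm vi \<le> V" "norm vl \<le> V"
  shows "norm (p (norm (xi - xl)) *\<^sub>R (vl - vi) - p (norm (xj - xl)) *\<^sub>R (vl - vj))
     \<le> 2 * L * V * norm (xi - xj) + P * norm (vi - vj)"
proof -
  have split: "p (norm (xi - xl)) *\<^sub>R (vl - vi) - p (norm (xj - xl)) *\<^sub>R (vl - vj)
     = (p (norm (xi - xl)) - p (norm (xj - xl))) *\<^sub>R (vl - vi) - p (norm (xj - xl)) *\<^sub>R (vi - vj)"
    by (simp add: algebra_simps)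
  have "\<bar>norm (xi - xl) - norm (xj - xl)\<bar> \<le> norm (xi - xj)"
    using norm_triangle_ineq3[of "xi - xl" "xj - xl"] by simp
  moreover have "norm (vl - vi) \<le> 2 * V"
    using norm_triangle_ineq4[of vl vi] V by simp
  ultimately have "norm ((p (norm (xi - xl)) - p (norm (xj - xl))) *\<^sub>R (vl - vi)) \<le> (L * norm (xi - xj)) * (2 * V)"
    unfolding norm_scaleR using lip L by (intro mult_mono) (auto intro: order_trans mult_left_mono)
  moreover have "norm (p (norm (xj - xl)) *\<^sub>R (vi - vj)) \<le> P * norm (vi - vj)"
    unfolding norm_scaleR using P by (simp add: mult_right_mono)
  ultimately show ?thesis
    unfolding split
    using norm_triangle_ineq4[of "(p (norm (xi - xl)) - p (norm (xj - xl))) *\<^sub>R (vl - vi)"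
        "p (norm (xj - xl)) *\<^sub>R (vi - vj)"]
    by (simp add: algebra_simps)
qed

lemma cucker_smale_force_difference_bound:
  fixes X V :: "'i::finite \<Rightarrow> 'a::real_normed_vector"
  assumes lip: "L-lipschitz_on {0..R} p" and P: "\<And>s. s \<in> {0..R} \<Longrightarrow> \<bar>p s\<bar> \<le> P"
    and R: "\<And>k l. norm (X k - X l) \<le> R" and Vm: "\<And>k. norm (V k) \<le> Vm"
  shows "norm ((1 / real CARD('i)) *\<^sub>R (\<Sum>l\<in>UNIV. p (norm (X i - X l)) *\<^sub>R (V l - V i))
      - (1 / real CARD('i)) *\<^sub>R (\<Sum>l\<in>UNIV. p (norm (X j - X l)) *\<^sub>R (V l - V j)))
    \<le> 2 * L * Vm * norm (X i - X j) + P * norm (V i - V j)"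
proof -
  have "norm (\<Sum>l\<in>UNIV. p (norm (X i - X l)) *\<^sub>R (V l - V i) - p (norm (X j - X l)) *\<^sub>R (V l - V j))
      \<le> (\<Sum>l\<in>(UNIV::'i set). 2 * L * Vm * norm (X i - X j) + P * norm (V i - V j))"
    using R Vm P lipschitz_on_nonneg[OF lip] lipschitz_on_normD[OF lip]
    by (intro order_trans[OF norm_sum] sum_mono kernel_term_difference_bound) auto
  then have "(1 / real CARD('i)) * norm (\<Sum>l\<in>UNIV. p (norm (X i - X l)) *\<^sub>R (V l - V i) - p (norm (X j - X l)) *\<^sub>R (V l - V j))
      \<le> (1 / real CARD('i)) * (\<Sum>l\<in>(UNIV::'i set). 2 * L * Vm * norm (X i - X j) + P * norm (V i - V j))"
    by (rule mult_left_mono) simp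
  also have "\<dots> = 2 * L * Vm * norm (X i - X j) + P * norm (V i - V j)"
    by simp
  finally show ?thesis
    by (simp add: sum_subtractf scaleR_diff_right[symmetric])
qed

lemma cucker_smale_pair_coincide_bounded:
  fixes X V :: "real \<Rightarrow> 'i::finite \<Rightarrow> 'a::real_inner" and p :: "real \<Rightarrow> real"
  assumes Xd: "\<And>k t. t \<in> {0..T} \<Longrightarrow> ((\<lambda>s. X s k) has_vector_derivative V t k) (at t within {0..T})"
    and Vd: "\<And>k t. t \<in> {0..T} \<Longrightarrow> ((\<lambda>s. V s k) has_vector_derivative
        (1 / real CARD('i)) *\<^sub>R (\<Sum>l\<in>UNIV. p (norm (X t k - X t l)) *\<^sub>R (V t l - V t k))) (at t within {0..T})"
    and lip: "L-lipschitz_on {0..R} p" and P: "\<And>s. s \<in> {0..R} \<Longrightarrow> \<bar>p s\<bar> \<le> P"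
    and R: "\<And>t k l. t \<in> {0..T} \<Longrightarrow> norm (X t k - X t l) \<le> R"
    and Vm: "\<And>t k. t \<in> {0..T} \<Longrightarrow> norm (V t k) \<le> Vm"
    and init: "X 0 i = X 0 j" "V 0 i = V 0 j" and t: "t \<in> {0..T}"
  shows "X t i = X t j \<and> V t i = V t j"
proof -
  define D where "D s = X s i - X s j" for s
  define E where "E s = V s i - V s j" for s
  define A where "A s k = (1 / real CARD('i)) *\<^sub>R (\<Sum>l\<in>UNIV. p (norm (X s k - X s l)) *\<^sub>R (V s l - V s k))" for s k
  define f where "f s = D s \<bullet> D s + E s \<bullet> E s" for s
  define f' where "f' s = 2 * (D s \<bullet> E s) + 2 * (E s \<bullet> (A s i - A s j))" for s
  have L: "0 \<le> L"
    using lip by (rule lipschitz_on_nonneg)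
  have P0: "0 \<le> P"
    using P[of 0] R[of 0 i i] t by (auto intro: order_trans)
  have Vm0: "0 \<le> Vm"
    using t Vm[of 0 i] by (auto intro: order_trans[OF norm_ge_zero])
  have "(f has_real_derivative f' s) (at s within {0..T})" if s: "s \<in> {0..T}" for s
  proof -
    have "(D has_vector_derivative E s) (at s within {0..T})"
      unfolding D_def E_def using Xd[OF s] by (intro derivative_intros) auto
    moreover have "(E has_vector_derivative (A s i - A s j)) (at s within {0..T})"
      unfolding E_def A_def using Vd[OF s] by (intro derivative_intros) auto
    ultimately show ?thesis
      unfolding f_def f'_def by (intro derivative_intros has_real_derivative_inner_self)
  qed
  moreover have "f' s \<le> (1 + 2 * L * Vm + 2 * P) * f s" if s: "s \<in> {0..T}" for s
  proof -
    have "norm (A s i - A s j) \<le> 2 * L * Vm * norm (D s) + P * norm (E s)"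
      unfolding A_def D_def E_def
      by (rule cucker_smale_force_difference_bound[OF lip P R[OF s] Vm[OF s]])
    then have "norm (E s) * norm (A s i - A s j) \<le> norm (E s) * (2 * L * Vm * norm (D s) + P * norm (E s))"
      by (simp add: mult_left_mono)
    moreover have "D s \<bullet> E s \<le> norm (D s) * norm (E s)" "E s \<bullet> (A s i - A s j) \<le> norm (E s) * norm (A s i - A s j)"
      by (simp_all add: Cauchy_Schwarz_ineq2[THEN abs_le_D1])
    ultimately have "f' s \<le> 2 * (norm (D s) * norm (E s)) + 2 * (norm (E s) * (2 * L * Vm * norm (D s) + P * norm (E s)))"
      unfolding f'_def by linarith
    also have "\<dots> \<le> (1 + 2 * L * Vm + 2 * P) * (norm (D s) * norm (D s) + norm (E s) * norm (E s))"
      using cross_terms_le_sum_squares[of "2 * L * Vm" P "norm (D s)" "norm (E s)"] L Vm0 P0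
      by simp
    also have "norm (D s) * norm (D s) + norm (E s) * norm (E s) = f s"
      unfolding f_def by (simp add: dot_square_norm power2_eq_square)
    finally show ?thesis .
  qed
  moreover have "0 \<le> f s" if "s \<in> {0..T}" for s
    unfolding f_def by simp
  moreover have "f 0 = 0"
    unfolding f_def D_def E_def using init by simp
  ultimately have "f t = 0"
    using nonneg_vanishes_if_deriv_le_linear t by blast
  then show ?thesis
    unfolding f_def D_def E_def by (simp add: add_nonneg_eq_0_iff)
qed

lemma cucker_smale_pair_coincide:
  fixes X V :: "real \<Rightarrow> 'i::finite \<Rightarrow> 'a::real_inner" and p :: "real \<Rightarrow> real"
  assumes Xd: "\<And>k t. t \<in> {0..T} \<Longrightarrow> ((\<lambda>s. X s k) has_vector_derivative V t k) (at t within {0..T})"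
    and Vd: "\<And>k t. t \<in> {0..T} \<Longrightarrow> ((\<lambda>s. V s k) has_vector_derivative
        (1 / real CARD('i)) *\<^sub>R (\<Sum>l\<in>UNIV. p (norm (X t k - X t l)) *\<^sub>R (V t l - V t k))) (at t within {0..T})"
    and a: "0 < a" and const: "\<And>s. 0 \<le> s \<Longrightarrow> s \<le> a \<Longrightarrow> p s = c"
    and diff: "\<And>s. 0 < s \<Longrightarrow> p differentiable (at s)"
    and cont: "\<And>s. 0 < s \<Longrightarrow> isCont (deriv p) s"
    and init: "X 0 i = X 0 j" "V 0 i = V 0 j" and t: "t \<in> {0..T}"
  shows "X t i = X t j \<and> V t i = V t j"
proof -
  have "continuous_on {0..T} (\<lambda>s. X s k)" "continuous_on {0..T} (\<lambda>s. V s k)" for k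
    unfolding continuous_on_eq_continuous_within
    using Xd Vd has_vector_derivative_continuous by blast+
  then obtain Bx Bv where Bx: "\<And>t k. t \<in> {0..T} \<Longrightarrow> norm (X t k) \<le> Bx"
      and Bv: "\<And>t k. t \<in> {0..T} \<Longrightarrow> norm (V t k) \<le> Bv"
    by (metis bounded_finite_family_on_compact compact_Icc)
  have R: "norm (X t k - X t l) \<le> 2 * Bx" if "t \<in> {0..T}" for t k l
    using norm_triangle_ineq4[of "X t k" "X t l"] Bx[OF that, of k] Bx[OF that, of l] by linarith
  obtain L where lip: "L-lipschitz_on {0..2 * Bx} p"
    using lipschitz_on_if_constant_near_zero[OF a const diff cont] by blast
  have P: "\<bar>p s\<bar> \<le> \<bar>p 0\<bar> + L * (2 * Bx)" if "s \<in> {0..2 * Bx}" for s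
  proof -
    have "\<bar>p s - p 0\<bar> \<le> L * s"
      using lipschitz_on_normD[OF lip that, of 0] that by simp
    moreover have "L * s \<le> L * (2 * Bx)"
      using that lipschitz_on_nonneg[OF lip] by (simp add: mult_left_mono)
    ultimately show ?thesis
      by linarith
  qed
  show ?thesis
    using cucker_smale_pair_coincide_bounded[OF Xd Vd lip P R Bv init t] .
qed

lemma consensus_equal_rows_stay_equal:
  fixes w :: "real \<Rightarrow> 'i \<Rightarrow> 'a::real_inner" and q :: "real \<Rightarrow> 'i \<Rightarrow> 'i \<Rightarrow> real"
  assumes wd: "\<And>k t. k \<in> C \<Longrightarrow> t \<in> {a..<b} \<Longrightarrow>
      ((\<lambda>s. w s k) has_vector_derivative c *\<^sub>R (\<Sum>l\<in>C. q t k l *\<^sub>R (w t l - w t k))) (at t within {a..<b})"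
    and ij: "i \<in> C" "j \<in> C"
    and rows: "\<And>t l. t \<in> {a..<b} \<Longrightarrow> q t i l = q t j l"
    and qnn: "\<And>t l. t \<in> {a..<b} \<Longrightarrow> 0 \<le> q t i l"
    and c: "0 \<le> c" and init: "w a i = w a j" and t: "t \<in> {a..<b}"
  shows "w t i = w t j"
proof -
  define W where "W s = w s i - w s j" for s
  define g where "g s = W s \<bullet> W s" for s
  define \<kappa> where "\<kappa> s = c * (\<Sum>l\<in>C. q s i l)" for s
  have "(g has_real_derivative 2 * (W s \<bullet> (- \<kappa> s) *\<^sub>R W s)) (at s within {a..t})" if s: "s \<in> {a..t}" for s
  proof -
    have s': "s \<in> {a..<b}"
      using s t by auto
    have "((\<lambda>s. w s k) has_vector_derivative c *\<^sub>R (\<Sum>l\<in>C. q s k l *\<^sub>R (w s l - w s k))) (at s within {a..t})"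
      if "k \<in> C" for k
      using t by (intro has_vector_derivative_within_subset[OF wd[OF that s']]) auto
    then have "(W has_vector_derivative
        c *\<^sub>R (\<Sum>l\<in>C. q s i l *\<^sub>R (w s l - w s i)) - c *\<^sub>R (\<Sum>l\<in>C. q s j l *\<^sub>R (w s l - w s j))) (at s within {a..t})"
      unfolding W_def using ij by (intro derivative_intros)
    moreover have "c *\<^sub>R (\<Sum>l\<in>C. q s i l *\<^sub>R (w s l - w s i)) - c *\<^sub>R (\<Sum>l\<in>C. q s j l *\<^sub>R (w s l - w s j))
        = (- \<kappa> s) *\<^sub>R W s"
    proof -
      have "(\<Sum>l\<in>C. q s j l *\<^sub>R (w s l - w s i)) - (\<Sum>l\<in>C. q s j l *\<^sub>R (w s l - w s j))
          = (\<Sum>l\<in>C. q s j l *\<^sub>R ((w s l - w s i) - (w s l - w s j)))"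
        unfolding sum_subtractf[symmetric] scaleR_diff_right ..
      also have "\<dots> = (\<Sum>l\<in>C. q s j l) *\<^sub>R (w s j - w s i)"
        by (simp add: scaleR_sum_left)
      finally show ?thesis
        unfolding W_def \<kappa>_def rows[OF s'] scaleR_diff_right[symmetric]
        by (simp add: scaleR_diff_right)
    qed
    ultimately show ?thesis
      unfolding g_def by (intro has_real_derivative_inner_self) auto
  qed
  moreover have "2 * (W s \<bullet> (- \<kappa> s) *\<^sub>R W s) \<le> 0 * g s" if "s \<in> {a..t}" for s
    using c qnn[of s] that t unfolding g_def \<kappa>_def by (simp add: sum_nonneg)
  moreover have "0 \<le> g s" for s
    unfolding g_def by simp
  moreover have "g a = 0"
    unfolding g_def W_def init by simp
  ultimately have "g t = 0"
    using nonneg_vanishes_if_deriv_le_linear[of a t g "\<lambda>s. 2 * (W s \<bullet> (- \<kappa> s) *\<^sub>R W s)" 0] t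
    by auto
  then show ?thesis
    unfolding g_def W_def by simp
qed

lemma consensus_energy_has_derivative:
  fixes w :: "real \<Rightarrow> 'i \<Rightarrow> 'a::real_inner" and q :: "real \<Rightarrow> 'i \<Rightarrow> 'i \<Rightarrow> real"
  assumes wd: "\<And>k. k \<in> C \<Longrightarrow>
      ((\<lambda>s. w s k) has_vector_derivative c *\<^sub>R (\<Sum>l\<in>C. q t k l *\<^sub>R (w t l - w t k))) (at t within S)"
    and qsym: "\<And>k l. q t k l = q t l k"
  shows "((\<lambda>s. \<Sum>k\<in>C. w s k \<bullet> w s k) has_real_derivative
      - c * (\<Sum>k\<in>C. \<Sum>l\<in>C. q t k l * ((w t l - w t k) \<bullet> (w t l - w t k)))) (at t within S)"
proof -
  define Q where "Q = (\<Sum>k\<in>C. \<Sum>l\<in>C. q t k l * (w t k \<bullet> (w t l - w t k)))"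
  have "((\<lambda>s. \<Sum>k\<in>C. w s k \<bullet> w s k) has_real_derivative
      (\<Sum>k\<in>C. 2 * (w t k \<bullet> c *\<^sub>R (\<Sum>l\<in>C. q t k l *\<^sub>R (w t l - w t k))))) (at t within S)"
    using wd by (intro DERIV_sum has_real_derivative_inner_self)
  moreover have "(\<Sum>k\<in>C. 2 * (w t k \<bullet> c *\<^sub>R (\<Sum>l\<in>C. q t k l *\<^sub>R (w t l - w t k)))) = 2 * c * Q"
    unfolding Q_def by (simp add: inner_sum_right sum_distrib_left mult.assoc)
  moreover have "(\<Sum>k\<in>C. \<Sum>l\<in>C. q t k l * ((w t l - w t k) \<bullet> (w t l - w t k))) = - (2 * Q)"
  proof -
    \<comment> \<open>symmetrise by swapping the summation indices\<close>
    have "Q = (\<Sum>k\<in>C. \<Sum>l\<in>C. q t k l * (w t l \<bullet> (w t k - w t l)))"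
      unfolding Q_def by (subst sum.swap) (simp add: qsym)
    then have "2 * Q = (\<Sum>k\<in>C. \<Sum>l\<in>C. q t k l * (w t k \<bullet> (w t l - w t k)) + q t k l * (w t l \<bullet> (w t k - w t l)))"
      unfolding Q_def sum.distrib by simp
    also have "\<dots> = - (\<Sum>k\<in>C. \<Sum>l\<in>C. q t k l * ((w t l - w t k) \<bullet> (w t l - w t k)))"
      unfolding sum_negf[symmetric]
      by (intro sum.cong refl) (simp add: algebra_simps inner_diff_left inner_diff_right inner_commute)
    finally show ?thesis
      by simp
  qed
  ultimately show ?thesis
    by (simp add: mult.assoc mult.left_commute)
qed

lemma consensus_weight_integral_le:
  fixes w :: "real \<Rightarrow> 'i \<Rightarrow> 'a::real_inner" and q :: "real \<Rightarrow> 'i \<Rightarrow> 'i \<Rightarrow> real"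
  assumes wd: "\<And>k t. k \<in> C \<Longrightarrow> t \<in> {a..b} \<Longrightarrow>
      ((\<lambda>s. w s k) has_vector_derivative c *\<^sub>R (\<Sum>l\<in>C. q t k l *\<^sub>R (w t l - w t k))) (at t within {a..b})"
    and fin: "finite C" and qsym: "\<And>t k l. q t k l = q t l k" and qnn: "\<And>t k l. 0 \<le> q t k l"
    and c: "0 < c" and ij: "i \<in> C" "j \<in> C" and ab: "a \<le> b"
    and far: "\<And>t. t \<in> {a..b} \<Longrightarrow> \<epsilon> \<le> norm (w t i - w t j)" and \<epsilon>: "0 < \<epsilon>"
  shows "(\<integral>\<^sup>+ s\<in>{a..b}. ennreal (q s i j) \<partial>lborel) \<le> ennreal ((\<Sum>k\<in>C. w a k \<bullet> w a k) / (c * \<epsilon>\<^sup>2))"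
proof -
  define E where "E s = (\<Sum>k\<in>C. w s k \<bullet> w s k)" for s
  define dissipation where
    "dissipation s = (\<Sum>k\<in>C. \<Sum>l\<in>C. q s k l * ((w s l - w s k) \<bullet> (w s l - w s k)))" for s
  have "(E has_vector_derivative - c * dissipation s) (at s within {a..b})" if "s \<in> {a..b}" for s
    unfolding E_def dissipation_def has_real_derivative_iff_has_vector_derivative[symmetric]
    using wd[OF _ that] qsym by (rule consensus_energy_has_derivative)
  then have "((\<lambda>s. - c * dissipation s) has_integral E b - E a) {a..b}"
    by (rule fundamental_theorem_of_calculus[OF ab])
  from has_integral_mult_right[OF this, of "- 1 / (c * \<epsilon>\<^sup>2)"]
  have "((\<lambda>s. dissipation s / \<epsilon>\<^sup>2) has_integral - ((E b - E a) / (c * \<epsilon>\<^sup>2))) {a..b}"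
    using c by (simp add: field_simps)
  then have integral: "((\<lambda>s. dissipation s / \<epsilon>\<^sup>2) has_integral (E a - E b) / (c * \<epsilon>\<^sup>2)) {a..b}"
    by (simp add: minus_divide_left)
  have weight_le: "q s i j \<le> dissipation s / \<epsilon>\<^sup>2" if s: "s \<in> {a..b}" for s
  proof -
    have nonneg: "0 \<le> q s k l * ((w s l - w s k) \<bullet> (w s l - w s k))" for k l
      using qnn by simp
    have "\<epsilon>\<^sup>2 \<le> (w s j - w s i) \<bullet> (w s j - w s i)"
      using far[OF s] \<epsilon> by (simp add: power2_norm_eq_inner[symmetric] norm_minus_commute power_mono)
    then have "q s i j * \<epsilon>\<^sup>2 \<le> q s i j * ((w s j - w s i) \<bullet> (w s j - w s i))"
      using qnn by (simp add: mult_left_mono)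
    also have "\<dots> \<le> (\<Sum>l\<in>C. q s i l * ((w s l - w s i) \<bullet> (w s l - w s i)))"
      using ij fin nonneg by (intro member_le_sum) auto
    also have "\<dots> \<le> dissipation s"
      unfolding dissipation_def using ij fin nonneg by (intro member_le_sum sum_nonneg) auto
    finally show ?thesis
      using c \<epsilon> by (simp add: field_simps)
  qed
  have "(\<integral>\<^sup>+ s\<in>{a..b}. ennreal (q s i j) \<partial>lborel) \<le> (\<integral>\<^sup>+ s\<in>{a..b}. ennreal (dissipation s / \<epsilon>\<^sup>2) \<partial>lborel)"
    using weight_le by (intro nn_integral_mono) (simp add: ennreal_leI split: split_indicator)
  also have "\<dots> = ennreal ((E a - E b) / (c * \<epsilon>\<^sup>2))"
    using weight_le qnn by (intro nn_integral_has_integral_lebesgue'[OF _ integral]) (meson order_trans)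
  also have "\<dots> \<le> ennreal (E a / (c * \<epsilon>\<^sup>2))"
    using c \<epsilon> unfolding E_def by (intro ennreal_leI divide_right_mono) (auto intro!: sum_nonneg)
  finally show ?thesis
    unfolding E_def .
qed

lemma consensus_pair_frequently_close:
  fixes w :: "real \<Rightarrow> 'i \<Rightarrow> 'a::real_inner" and q :: "real \<Rightarrow> 'i \<Rightarrow> 'i \<Rightarrow> real"
  assumes wd: "\<And>k t. k \<in> C \<Longrightarrow> t \<in> {a..<b} \<Longrightarrow>
      ((\<lambda>s. w s k) has_vector_derivative c *\<^sub>R (\<Sum>l\<in>C. q t k l *\<^sub>R (w t l - w t k))) (at t within {a..<b})"
    and fin: "finite C" and qsym: "\<And>t k l. q t k l = q t l k" and qnn: "\<And>t k l. 0 \<le> q t k l"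
    and c: "0 < c" and ij: "i \<in> C" "j \<in> C"
    and meas: "(\<lambda>s. ennreal (q s i j) * indicator {a..<b} s) \<in> borel_measurable lborel"
    and diverge: "\<And>t. t \<in> {a..<b} \<Longrightarrow> (\<integral>\<^sup>+ s\<in>{t..<b}. ennreal (q s i j) \<partial>lborel) = \<infinity>"
    and ab: "a < b" and \<epsilon>: "0 < \<epsilon>" and \<tau>: "\<tau> < b"
  shows "\<exists>s\<in>{a..<b}. \<tau> < s \<and> norm (w s i - w s j) < \<epsilon>"
proof (rule ccontr)
  assume "\<not> ?thesis"
  then have far: "\<And>s. s \<in> {a..<b} \<Longrightarrow> \<tau> < s \<Longrightarrow> \<epsilon> \<le> norm (w s i - w s j)"
    by (force simp: not_less)
  define t1 where "t1 = (max \<tau> a + b) / 2"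
  have t1: "t1 \<in> {a..<b}" "\<tau> < t1"
    using ab \<tau> by (auto simp: t1_def)
  have "(\<integral>\<^sup>+ s\<in>{t1..<b}. ennreal (q s i j) \<partial>lborel) \<le> ennreal ((\<Sum>k\<in>C. w t1 k \<bullet> w t1 k) / (c * \<epsilon>\<^sup>2))"
  proof (rule set_nn_integral_Ico_le)
    have "(\<lambda>s. ennreal (q s i j) * indicator {t1..<b} s)
        = (\<lambda>s. (ennreal (q s i j) * indicator {a..<b} s) * indicator {t1..<b} s)"
      using t1 by (auto simp: fun_eq_iff split: split_indicator)
    then show "(\<lambda>s. ennreal (q s i j) * indicator {t1..<b} s) \<in> borel_measurable lborel"
      using meas by (simp add: borel_measurable_times_ennreal)
  next
    fix d assume d: "t1 \<le> d" "d < b"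
    show "(\<integral>\<^sup>+ s\<in>{t1..d}. ennreal (q s i j) \<partial>lborel) \<le> ennreal ((\<Sum>k\<in>C. w t1 k \<bullet> w t1 k) / (c * \<epsilon>\<^sup>2))"
    proof (rule consensus_weight_integral_le[OF _ fin qsym qnn c ij d(1) _ \<epsilon>])
      show "((\<lambda>s. w s k) has_vector_derivative c *\<^sub>R (\<Sum>l\<in>C. q t k l *\<^sub>R (w t l - w t k))) (at t within {t1..d})"
        if "k \<in> C" "t \<in> {t1..d}" for k t
        using wd[of k t] that t1 d by (auto intro: has_vector_derivative_within_subset)
      show "\<epsilon> \<le> norm (w t i - w t j)" if "t \<in> {t1..d}" for t
        using far[of t] that t1 d by auto
    qed
  qed
  then show False
    using diverge[OF t1(1)] by (simp add: top_unique)
qed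

lemma psi_norm_indicator_measurable:
  fixes X :: "real \<Rightarrow> 'a::real_normed_vector"
  assumes "continuous_on {a..<b} X"
  shows "(\<lambda>s. ennreal (psi \<alpha> (norm (X s))) * indicator {a..<b} s) \<in> borel_measurable lborel"
proof -
  define Y where "Y s = indicator {a..<b} s *\<^sub>R X s" for s
  have "Y \<in> borel_measurable borel"
    unfolding Y_def using assms by (intro borel_measurable_continuous_on_indicator) auto
  moreover have "psi \<alpha> \<in> borel_measurable borel"
    unfolding psi_def by measurable
  ultimately have "(\<lambda>s. ennreal (psi \<alpha> (norm (Y s))) * indicator {a..<b} s) \<in> borel_measurable borel"
    by measurable
  moreover have "(\<lambda>s. ennreal (psi \<alpha> (norm (Y s))) * indicator {a..<b} s)
      = (\<lambda>s. ennreal (psi \<alpha> (norm (X s))) * indicator {a..<b} s)"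
    by (auto simp: fun_eq_iff Y_def split: split_indicator)
  ultimately show ?thesis
    by (simp add: measurable_cong_sets[OF sets_lborel refl])
qed

lemma simclass_eq_if_mem:
  assumes "k \<in> simclass \<alpha> x0 v0 x T0 i"
  shows "simclass \<alpha> x0 v0 x T0 k = simclass \<alpha> x0 v0 x T0 i"
  using assms unfolding simclass_def simrel_def
  by (auto intro: equivclp_trans equivclp_sym)

lemma self_mem_simclass: "i \<in> simclass \<alpha> x0 v0 x T0 i"
  unfolding simclass_def simrel_def by (simp add: equivclp_refl)

lemma mem_simclass_if_dotsim: "dotsim \<alpha> x0 v0 x T0 i j \<Longrightarrow> j \<in> simclass \<alpha> x0 v0 x T0 i"
  unfolding simclass_def simrel_def by (simp add: r_into_equivclp)

lemma regularized_limit_pair_coincide: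
  fixes psin :: "nat \<Rightarrow> real \<Rightarrow> real"
    and xs vs :: "nat \<Rightarrow> real \<Rightarrow> 'i::finite \<Rightarrow> 'a::real_inner"
    and x v :: "real \<Rightarrow> 'i \<Rightarrow> 'a"
  assumes psin_near: "\<And>n s. n \<ge> 2 \<Longrightarrow> 0 \<le> s \<Longrightarrow> s \<le> real n powr (- 1 / \<alpha>) \<Longrightarrow> psin n s = real n"
    and psin_smooth: "\<And>n k s. n \<ge> 2 \<Longrightarrow> 0 < s \<Longrightarrow> ((deriv ^^ k) (psin n)) differentiable (at s)"
    and xs_deriv: "\<And>n k t. n \<ge> 2 \<Longrightarrow> t \<in> {0..T} \<Longrightarrow>
        ((\<lambda>s. xs n s k) has_vector_derivative vs n t k) (at t within {0..T})"
    and vs_deriv: "\<And>n k t. n \<ge> 2 \<Longrightarrow> t \<in> {0..T} \<Longrightarrow>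
        ((\<lambda>s. vs n s k) has_vector_derivative
           (1 / real CARD('i)) *\<^sub>R (\<Sum>l\<in>UNIV. psin n (norm (xs n t k - xs n t l)) *\<^sub>R (vs n t l - vs n t k)))
         (at t within {0..T})"
    and init: "\<And>n. n \<ge> 2 \<Longrightarrow> xs n 0 i = xs n 0 j \<and> vs n 0 i = vs n 0 j"
    and r_ge: "\<And>n. r n \<ge> 2"
    and unif: "\<And>k. uniform_limit {0..T} (\<lambda>n t. xs (r n) t k) (\<lambda>t. x t k) sequentially"
    and unif_v: "\<And>k t. t \<in> {0..<T0} \<Longrightarrow> uniform_limit {0..t} (\<lambda>n s. vs (r n) s k) (\<lambda>s. v s k) sequentially"
    and T0: "T0 \<le> T"
  shows "\<forall>t\<in>{0..T}. x t i = x t j" and "\<forall>t\<in>{0..<T0}. v t i = v t j"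
proof -
  have same: "xs n t i = xs n t j \<and> vs n t i = vs n t j" if n: "n \<ge> 2" and t: "t \<in> {0..T}" for n t
  proof (rule cucker_smale_pair_coincide[OF xs_deriv[OF n] vs_deriv[OF n] _ psin_near[OF n]])
    show "psin n differentiable (at s)" if "0 < s" for s
      using psin_smooth[OF n that, of 0] by simp
    show "isCont (deriv (psin n)) s" if "0 < s" for s
      using psin_smooth[OF n that, of 1] by (simp add: differentiable_imp_continuous_within)
  qed (use n init t in auto)
  show "\<forall>t\<in>{0..T}. x t i = x t j"
  proof
    fix t assume t: "t \<in> {0..T}"
    show "x t i = x t j"
      using uniform_limits_eq_at[OF unif[of i] unif[of j] _ t] same[OF r_ge t] by blast
  qed
  show "\<forall>t\<in>{0..<T0}. v t i = v t j"
  proof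
    fix t assume t: "t \<in> {0..<T0}"
    then have "t \<in> {0..t}" "t \<in> {0..T}"
      using T0 by auto
    then show "v t i = v t j"
      using uniform_limits_eq_at[OF unif_v[OF t, of i] unif_v[OF t, of j]] same[OF r_ge] by blast
  qed
qed

theorem lemma2p3:
  fixes \<alpha> T T0 t0 :: real
    and psin :: "nat \<Rightarrow> real \<Rightarrow> real"
    and x0 v0 :: "'i::finite \<Rightarrow> real ^ 'd"
    and xs vs :: "nat \<Rightarrow> real \<Rightarrow> 'i \<Rightarrow> real ^ 'd"
    and r :: "nat \<Rightarrow> nat"
    and x v w :: "real \<Rightarrow> 'i \<Rightarrow> real ^ 'd"
    and i j :: 'i
  assumes alpha: "0 < \<alpha>" "\<alpha> < 1"
    and T_pos: "0 < T"
    \<comment> \<open>the regularized kernels psi_n, n \<ge> 2\<close>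
    and psin_far: "\<And>n s. n \<ge> 2 \<Longrightarrow> s \<ge> real (n - 1) powr (- 1 / \<alpha>) \<Longrightarrow> psin n s = psi \<alpha> s"
    and psin_near: "\<And>n s. n \<ge> 2 \<Longrightarrow> 0 \<le> s \<Longrightarrow> s \<le> real n powr (- 1 / \<alpha>) \<Longrightarrow> psin n s = real n"
    and psin_smooth: "\<And>n k s. n \<ge> 2 \<Longrightarrow> 0 < s \<Longrightarrow> ((deriv ^^ k) (psin n)) differentiable (at s)"
    and psin_mono: "\<And>n. n \<ge> 2 \<Longrightarrow> antimono_on {0..} (psin n)"
    \<comment> \<open>x^n, n \<ge> 2: C^2 solutions on [0,T] of the regularized system with the given data\<close>
    and xs_deriv: "\<And>n k t. n \<ge> 2 \<Longrightarrow> t \<in> {0..T} \<Longrightarrow>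
        ((\<lambda>s. xs n s k) has_vector_derivative vs n t k) (at t within {0..T})"
    and vs_deriv: "\<And>n k t. n \<ge> 2 \<Longrightarrow> t \<in> {0..T} \<Longrightarrow>
        ((\<lambda>s. vs n s k) has_vector_derivative
           (1 / real CARD('i)) *\<^sub>R (\<Sum>l\<in>UNIV. psin n (norm (xs n t k - xs n t l)) *\<^sub>R (vs n t l - vs n t k)))
         (at t within {0..T})"
    and xs_init: "\<And>n. n \<ge> 2 \<Longrightarrow> xs n 0 = x0"
    and vs_init: "\<And>n. n \<ge> 2 \<Longrightarrow> vs n 0 = v0"
    \<comment> \<open>subsequence converging uniformly on [0,T] to x\<close>
    and r_mono: "strict_mono r"
    and r_ge: "\<And>k. r k \<ge> 2"
    and unif: "\<And>k. uniform_limit {0..T} (\<lambda>n t. xs (r n) t k) (\<lambda>t. x t k) sequentially"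
    \<comment> \<open>definition of T0, and T0 \<le> T\<close>
    and T0_set_ne: "{t \<in> {0<..T}. \<exists>k. \<exists>l\<in>Bset x0 v0 k.
                      lim (\<lambda>n. norm (xs (r n) t k - xs (r n) t l)) = 0} \<noteq> {}"
    and T0_def: "T0 = Inf {t \<in> {0<..T}. \<exists>k. \<exists>l\<in>Bset x0 v0 k.
                      lim (\<lambda>n. norm (xs (r n) t k - xs (r n) t l)) = 0}"
    \<comment> \<open>C^1 convergence on [0,t] for every t < T0, with v = x' on [0,T0)\<close>
    and x_deriv: "\<And>k t. t \<in> {0..<T0} \<Longrightarrow>
        ((\<lambda>s. x s k) has_vector_derivative v t k) (at t within {0..<T0})"
    and unif_v: "\<And>k t. t \<in> {0..<T0} \<Longrightarrow>
        uniform_limit {0..t} (\<lambda>n s. vs (r n) s k) (\<lambda>s. v s k) sequentially"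
    \<comment> \<open>w = w^(t0)\<close>
    and t0: "0 < t0" "t0 < T0"
    and w_deriv: "\<And>k t. t \<in> {t0..<T0} \<Longrightarrow>
        ((\<lambda>s. w s k) has_vector_derivative
           (1 / real CARD('i)) *\<^sub>R (\<Sum>l\<in>simclass \<alpha> x0 v0 x T0 k.
               psi \<alpha> (norm (x t k - x t l)) *\<^sub>R (w t l - w t k)))
         (at t within {t0..<T0})"
    and w_init: "\<And>k. w t0 k = v t0 k"
    and ij: "dotsim \<alpha> x0 v0 x T0 i j"
  shows "\<exists>s :: nat \<Rightarrow> real. (\<forall>n. s n \<in> {t0..<T0}) \<and> s \<longlonglongrightarrow> T0 \<and>
           (\<lambda>n. norm (w (s n) i - w (s n) j)) \<longlonglongrightarrow> 0"
proof -
  define C where "C = simclass \<alpha> x0 v0 x T0 i"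
  have ij_C: "i \<in> C" "j \<in> C"
    unfolding C_def by (rule self_mem_simclass, rule mem_simclass_if_dotsim[OF ij])
  have T0_le: "T0 \<le> T"
    using T0_set_ne unfolding T0_def by (auto intro!: cInf_lower2 bdd_belowI[where m = 0])
  have wC: "((\<lambda>s. w s k) has_vector_derivative (1 / real CARD('i)) *\<^sub>R
        (\<Sum>l\<in>C. psi \<alpha> (norm (x t k - x t l)) *\<^sub>R (w t l - w t k))) (at t within {t0..<T0})"
    if "k \<in> C" "t \<in> {t0..<T0}" for k t
    using w_deriv[OF that(2), of k] simclass_eq_if_mem[OF that(1)[unfolded C_def]] unfolding C_def by simp
  have psi_nonneg: "0 \<le> psi \<alpha> s" for s
    unfolding psi_def by simp
  have "\<exists>s\<in>{t0..<T0}. \<tau> < s \<and> \<bar>norm (w s i - w s j)\<bar> < \<epsilon>" if \<epsilon>: "0 < \<epsilon>" and \<tau>: "\<tau> < T0" for \<epsilon> \<tau>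
  proof (cases "j \<in> Bset x0 v0 i")
    case False
    then have "xs n 0 i = xs n 0 j \<and> vs n 0 i = vs n 0 j" if "n \<ge> 2" for n
      using xs_init[OF that] vs_init[OF that] unfolding Bset_def by auto
    note coincide = regularized_limit_pair_coincide[OF psin_near psin_smooth xs_deriv vs_deriv this r_ge unif unif_v T0_le]
    have "w s i = w s j" if "s \<in> {t0..<T0}" for s
    proof (rule consensus_equal_rows_stay_equal[OF wC ij_C _ _ _ _ that])
      show "psi \<alpha> (norm (x t i - x t l)) = psi \<alpha> (norm (x t j - x t l))" if "t \<in> {t0..<T0}" for t l
        using coincide(1) that t0 T0_le by auto
    qed (use psi_nonneg w_init coincide(2) t0 in auto)
    then show ?thesis
      using \<epsilon> \<tau> t0 by (intro bexI[of _ "(max \<tau> t0 + T0) / 2"]) auto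
  next
    case True
    have "continuous_on {0..<T0} (\<lambda>s. x s k)" for k
      unfolding continuous_on_eq_continuous_within using x_deriv has_vector_derivative_continuous by blast
    then have "continuous_on {t0..<T0} (\<lambda>s. x s k)" for k
      by (rule continuous_on_subset) (use t0 in auto)
    then have "(\<lambda>s. ennreal (psi \<alpha> (norm (x s i - x s j))) * indicator {t0..<T0} s) \<in> borel_measurable lborel"
      by (intro psi_norm_indicator_measurable continuous_on_diff)
    moreover have "(\<integral>\<^sup>+ s\<in>{t..<T0}. ennreal (psi \<alpha> (norm (x s i - x s j))) \<partial>lborel) = \<infinity>" if "t \<in> {t0..<T0}" for t
      using ij True that t0 unfolding dotsim_def by auto
    ultimately show ?thesis
      using consensus_pair_frequently_close[OF wC, of i j] ij_C psi_nonneg t0 \<epsilon> \<tau>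
      by (simp add: norm_minus_commute)
  qed
  then show ?thesis
    by (rule sequence_to_right_end_if_frequently_small)
qed

end
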